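(* For any $\beta\in(0,1)$ and any $b>0$, there exists a sequence of random variables $(X_n)_{n\ge 1}$ on some probability space such that (1) $n^\beta X_n \to 0$ in probability, (2) $|X_n|\le b$ almost surely for all $n$, and (3) the sequence $(n^\beta \bar X_n)_{n\ge1}$ is not uniformly tight, where $\bar X_n := \frac1n\sum_{i=1}^n X_i$. In particular, $n^\beta X_n\to 0$ in probability does not imply $n^\beta\bar X_n\to 0$ in probability.
   Context: A sequence of real random variables $(Z_n)_{n\ge1}$ is uniformly tight if for every $\varepsilon>0$ there exists $M<\infty$ with $\sup_n \Pr(|Z_n|>M)<\varepsilon$. $\bar X_n$ denotes the Cesàro mean $\frac1n\sum_{i=1}^n X_i$. *)

theory Defs
  imports "HOL-Probability.Probability"
begin

definition tendsto_in_prob_zero :: "'a measure \<Rightarrow> (nat \<Rightarrow> 'a \<Rightarrow> real) \<Rightarrow> bool" where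
  "tendsto_in_prob_zero M Z \<longleftrightarrow>
     (\<forall>e>0. (\<lambda>n. measure M {\<omega> \<in> space M. \<bar>Z n \<omega>\<bar> > e}) \<longlonglongrightarrow> 0)"

definition uniformly_tight :: "'a measure \<Rightarrow> (nat \<Rightarrow> 'a \<Rightarrow> real) \<Rightarrow> bool" where
  "uniformly_tight M Z \<longleftrightarrow>
     (\<forall>e>0. \<exists>K::real. (SUP n\<in>{1..}. measure M {\<omega> \<in> space M. \<bar>Z n \<omega>\<bar> > K}) < e)"

definition cesaro :: "(nat \<Rightarrow> 'a \<Rightarrow> real) \<Rightarrow> nat \<Rightarrow> 'a \<Rightarrow> real" where
  "cesaro X n \<omega> = (\<Sum>i=1..n. X i \<omega>) / real n"

end

theory Submission
  imports Defs "HOL-Real_Asymp.Real_Asymp" "HOL-Library.Discrete_Functions"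
begin

text \<open>
  The counterexample is the typewriter sequence on the unit interval: the indices of the
  dyadic block \<open>[2^k, 2^(k+1))\<close> sweep again and again over the \<open>k + 1\<close> pieces of a partition
  of \<open>[0,1)\<close> into intervals of length \<open>1/(k+1)\<close>, and \<open>X\<^sub>i\<close> is \<open>b\<close> on the current piece and \<open>0\<close>
  elsewhere. Since \<open>X\<^sub>n\<close> vanishes outside a set of measure \<open>1/(floor_log n + 1)\<close>, any rescaling of
  it tends to \<open>0\<close> in probability. But within one block every point of \<open>[0,1)\<close> is covered
  about \<open>2^k/(k+1)\<close> times, so at \<open>n = 2^(k+1)\<close> the rescaled Cesaro mean is at least of the
  order \<open>b n^\<beta> / log\<^sub>2 n\<close> everywhere, which escapes every bound.
\<close>

lemma real_of_nat_div_ge: "real m / real n - 1 \<le> real (m div n)"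
proof (cases "n = 0")
  case False
  have "real m = real (m div n) * real n + real (m mod n)"
    by (metis div_mult_mod_eq of_nat_add of_nat_mult)
  moreover have "real (m mod n) < real n"
    using False by simp
  ultimately show ?thesis
    using False by (simp add: field_simps)
qed simp

lemma unit_interval_piece:
  fixes \<omega> :: real
  assumes "\<omega> \<in> {0..<1}" "m > 0"
  obtains r where "r < m" "\<omega> \<in> {real r / real m ..< real (r + 1) / real m}"
proof
  define r where "r = nat \<lfloor>real m * \<omega>\<rfloor>"
  have r_eq: "real r = of_int \<lfloor>real m * \<omega>\<rfloor>"
    using assms by (simp add: r_def)
  moreover have "real m * \<omega> < real m"
    using assms by simp
  ultimately show "r < m"
    by linarith
  have "real_of_int \<lfloor>real m * \<omega>\<rfloor> \<le> real m * \<omega>" "real m * \<omega> < real_of_int \<lfloor>real m * \<omega>\<rfloor> + 1"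
    by linarith+
  then show "\<omega> \<in> {real r / real m ..< real (r + 1) / real m}"
    using assms r_eq by (auto simp: field_simps)
qed

lemma tendsto_in_prob_zeroI:
  assumes "finite_measure M"
    and sets: "\<And>n. A n \<in> sets M"
    and support: "\<And>n \<omega>. \<omega> \<in> space M \<Longrightarrow> Z n \<omega> \<noteq> 0 \<Longrightarrow> \<omega> \<in> A n"
    and small: "(\<lambda>n. measure M (A n)) \<longlonglongrightarrow> 0"
  shows "tendsto_in_prob_zero M Z"
  unfolding tendsto_in_prob_zero_def
proof (intro allI impI)
  interpret finite_measure M by fact
  fix e :: real assume "e > 0"
  have "measure M {\<omega> \<in> space M. e < \<bar>Z n \<omega>\<bar>} \<le> measure M (A n)" for n
    using \<open>e > 0\<close> sets support by (intro finite_measure_mono) auto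
  then show "(\<lambda>n. measure M {\<omega> \<in> space M. e < \<bar>Z n \<omega>\<bar>}) \<longlonglongrightarrow> 0"
    by (intro tendsto_sandwich[OF _ _ tendsto_const small]) (auto intro: always_eventually)
qed

lemma not_uniformly_tightI:
  assumes "prob_space M"
    and meas: "\<And>n. Z n \<in> borel_measurable M"
    and unbounded: "\<And>K. \<exists>n\<ge>1. AE \<omega> in M. K < \<bar>Z n \<omega>\<bar>"
  shows "\<not> uniformly_tight M Z"
proof
  interpret prob_space M by fact
  assume "uniformly_tight M Z"
  then obtain K where K: "(SUP n\<in>{1..}. prob {\<omega> \<in> space M. K < \<bar>Z n \<omega>\<bar>}) < 1"
    unfolding uniformly_tight_def using zero_less_one by blast
  obtain n where "n \<ge> 1" and "AE \<omega> in M. K < \<bar>Z n \<omega>\<bar>"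
    using unbounded by blast
  moreover have "{\<omega> \<in> space M. K < \<bar>Z n \<omega>\<bar>} \<in> events"
    using meas[of n] by measurable
  ultimately have "prob {\<omega> \<in> space M. K < \<bar>Z n \<omega>\<bar>} = 1"
    by (simp add: prob_Collect_eq_1)
  moreover have "prob {\<omega> \<in> space M. K < \<bar>Z n \<omega>\<bar>} \<le> (SUP n\<in>{1..}. prob {\<omega> \<in> space M. K < \<bar>Z n \<omega>\<bar>})"
    using \<open>n \<ge> 1\<close> by (intro cSUP_upper bdd_aboveI[where M=1]) auto
  ultimately show False
    using K by simp
qed

definition uniform_unit_interval :: "real measure" where
  "uniform_unit_interval = uniform_measure lborel {0..<1}"

lemma prob_space_uniform_unit_interval: "prob_space uniform_unit_interval"
  unfolding uniform_unit_interval_def by (rule prob_space_uniform_measure) auto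

lemma sets_uniform_unit_interval [simp, measurable_cong]: "sets uniform_unit_interval = sets borel"
  and space_uniform_unit_interval [simp]: "space uniform_unit_interval = UNIV"
  by (auto simp: uniform_unit_interval_def)

lemma measure_uniform_unit_interval:
  "B \<in> sets borel \<Longrightarrow> measure uniform_unit_interval B = measure lborel ({0..<1} \<inter> B)"
  unfolding uniform_unit_interval_def by (subst measure_uniform_measure) auto

lemma AE_uniform_unit_interval: "AE \<omega> in uniform_unit_interval. \<omega> \<in> {0..<1}"
  unfolding uniform_unit_interval_def by (rule AE_uniform_measureI) auto

definition typewriter_pieces :: "nat \<Rightarrow> nat" where
  "typewriter_pieces i = floor_log i + 1"

definition typewriter_position :: "nat \<Rightarrow> nat" where
  "typewriter_position i = (i - 2 ^ floor_log i) mod typewriter_pieces i"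

definition typewriter_interval :: "nat \<Rightarrow> real set" where
  "typewriter_interval i =
     {real (typewriter_position i) / real (typewriter_pieces i) ..<
      real (typewriter_position i + 1) / real (typewriter_pieces i)}"

definition typewriter :: "real \<Rightarrow> nat \<Rightarrow> real \<Rightarrow> real" where
  "typewriter b i \<omega> = b * indicator (typewriter_interval i) \<omega>"

lemma typewriter_measurable [measurable]: "typewriter b i \<in> borel_measurable borel"
  unfolding typewriter_def typewriter_interval_def by measurable

lemma abs_typewriter_le: "b \<ge> 0 \<Longrightarrow> \<bar>typewriter b i \<omega>\<bar> \<le> b"
  by (simp add: typewriter_def indicator_def)

lemma typewriter_pieces_at_top: "filterlim typewriter_pieces at_top sequentially"
  unfolding filterlim_at_top eventually_at_top_linorder
proof
  fix k
  have "k \<le> typewriter_pieces i" if "2 ^ k \<le> i" for i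
    using floor_log_le_iff[OF that] by (simp add: typewriter_pieces_def)
  then show "\<exists>N. \<forall>i\<ge>N. k \<le> typewriter_pieces i"
    by blast
qed

lemma measure_typewriter_interval_le:
  "measure uniform_unit_interval (typewriter_interval i) \<le> 1 / real (typewriter_pieces i)"
proof -
  have "measure uniform_unit_interval (typewriter_interval i)
          = measure lborel ({0..<1} \<inter> typewriter_interval i)"
    by (simp add: measure_uniform_unit_interval typewriter_interval_def)
  also have "\<dots> \<le> measure lborel (typewriter_interval i)"
    by (intro measure_mono_fmeasurable)
       (auto simp: typewriter_interval_def typewriter_pieces_def fmeasurable_def divide_right_mono)
  also have "\<dots> = 1 / real (typewriter_pieces i)"
    by (simp add: typewriter_interval_def typewriter_pieces_def divide_simps)
  finally show ?thesis .
qed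

lemma measure_typewriter_interval_tendsto_0:
  "(\<lambda>i. measure uniform_unit_interval (typewriter_interval i)) \<longlonglongrightarrow> 0"
proof (rule tendsto_sandwich[OF _ _ tendsto_const])
  have "filterlim (\<lambda>i. real (typewriter_pieces i)) at_top sequentially"
    by (rule filterlim_compose[OF filterlim_real_sequentially typewriter_pieces_at_top])
  then show "(\<lambda>i. 1 / real (typewriter_pieces i)) \<longlonglongrightarrow> 0"
    by (intro tendsto_divide_0[OF tendsto_const] filterlim_at_top_imp_at_infinity)
qed (auto intro: always_eventually measure_typewriter_interval_le)

lemma typewriter_in_block:
  assumes "j < 2 ^ k"
  shows "typewriter_pieces (2 ^ k + j) = k + 1"
    and "typewriter_position (2 ^ k + j) = j mod (k + 1)"
proof -
  have "floor_log (2 ^ k + j) = k"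
    using assms by (intro floor_log_eqI) auto
  then show "typewriter_pieces (2 ^ k + j) = k + 1"
    and "typewriter_position (2 ^ k + j) = j mod (k + 1)"
    by (simp_all add: typewriter_pieces_def typewriter_position_def)
qed

text \<open>Within block \<open>k\<close> the pieces are swept \<open>2^k div (k + 1)\<close> complete times.\<close>

lemma typewriter_block_sum_ge:
  assumes "b \<ge> 0" "\<omega> \<in> {0..<1}"
  shows "b * real (2 ^ k div (k + 1)) \<le> (\<Sum>i=1..2^(k+1). typewriter b i \<omega>)"
proof -
  define q where "q = 2 ^ k div (k + 1)"
  obtain r where r: "r < k + 1" and \<omega>: "\<omega> \<in> {real r / real (k+1) ..< real (r + 1) / real (k+1)}"
    using unit_interval_piece[OF assms(2), of "k + 1"] by auto
  define idx where "idx t = 2 ^ k + (r + (k + 1) * t)" for t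
  have offset_lt: "r + (k + 1) * t < 2 ^ k" if "t < q" for t
  proof -
    have "r + (k + 1) * t < (k + 1) * (t + 1)"
      using r by simp
    also have "\<dots> \<le> (k + 1) * q"
      using that by (intro mult_left_mono) auto
    also have "\<dots> \<le> 2 ^ k"
      unfolding q_def by (rule times_div_less_eq_dividend)
    finally show ?thesis .
  qed
  have hit: "typewriter b (idx t) \<omega> = b" if "t < q" for t
    using typewriter_in_block[OF offset_lt[OF that]] mod_mult_self2[of r "k + 1" t] r \<omega>
    by (simp add: typewriter_def typewriter_interval_def idx_def)
  have "strict_mono idx"
    by (rule strict_monoI) (simp add: idx_def add_less_le_mono)
  then have "inj_on idx {..<q}"
    by (rule strict_mono_imp_inj_on)
  then have "b * real q = (\<Sum>i\<in>idx ` {..<q}. typewriter b i \<omega>)"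
    using hit by (simp add: sum.reindex)
  also have "\<dots> \<le> (\<Sum>i=1..2^(k+1). typewriter b i \<omega>)"
  proof (rule sum_mono2)
    show "idx ` {..<q} \<subseteq> {1..2^(k+1)}"
      using offset_lt by (force simp: idx_def)
  qed (use assms(1) in \<open>auto simp: typewriter_def\<close>)
  finally show ?thesis
    by (simp add: q_def)
qed

lemma cesaro_typewriter_ge:
  assumes "b \<ge> 0" "\<omega> \<in> {0..<1}"
  shows "b * ((2 ^ (k+1)) powr \<beta> / 2 ^ (k+1) * (2 ^ k / (real k + 1) - 1))
           \<le> real (2 ^ (k+1)) powr \<beta> * cesaro (typewriter b) (2 ^ (k+1)) \<omega>"
proof -
  have "b * (2 ^ k / (real k + 1) - 1) \<le> b * real (2 ^ k div (k + 1))"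
    using real_of_nat_div_ge[of "2 ^ k" "k + 1"] assms(1) by (intro mult_left_mono) (auto simp: add.commute)
  also have "\<dots> \<le> (\<Sum>i=1..2^(k+1). typewriter b i \<omega>)"
    by (rule typewriter_block_sum_ge[OF assms])
  finally have "(2 ^ (k+1)) powr \<beta> / 2 ^ (k+1) * (b * (2 ^ k / (real k + 1) - 1))
      \<le> (2 ^ (k+1)) powr \<beta> / 2 ^ (k+1) * (\<Sum>i=1..2^(k+1). typewriter b i \<omega>)"
    by (intro mult_left_mono) auto
  then show ?thesis
    by (simp add: cesaro_def algebra_simps)
qed

lemma cesaro_typewriter_unbounded:
  assumes "\<beta> > 0" "b > 0"
  shows "\<exists>n\<ge>1. \<forall>\<omega>\<in>{0..<1}. K < \<bar>real n powr \<beta> * cesaro (typewriter b) n \<omega>\<bar>"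
proof -
  have "filterlim (\<lambda>k::nat. b * ((2 ^ (k+1)) powr \<beta> / 2 ^ (k+1) * (2 ^ k / (real k + 1) - 1)))
          at_top at_top"
    using assms by real_asymp
  then obtain k where k: "K < b * ((2 ^ (k+1)) powr \<beta> / 2 ^ (k+1) * (2 ^ k / (real k + 1) - 1))"
    unfolding filterlim_at_top_dense eventually_sequentially by blast
  show ?thesis
  proof (intro exI conjI ballI)
    show "1 \<le> (2::nat) ^ (k+1)"
      by simp
    fix \<omega> :: real assume "\<omega> \<in> {0..<1}"
    with k cesaro_typewriter_ge[of b \<omega> k \<beta>] assms
    show "K < \<bar>real (2 ^ (k+1)) powr \<beta> * cesaro (typewriter b) (2 ^ (k+1)) \<omega>\<bar>"
      by linarith
  qed
qed

theorem proposition1: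
  fixes \<beta> b :: real
  assumes "0 < \<beta>" "\<beta> < 1" "b > 0"
  shows "\<exists>(M :: real measure) (X :: nat \<Rightarrow> real \<Rightarrow> real).
           prob_space M \<and>
           (\<forall>n\<ge>1. X n \<in> borel_measurable M) \<and>
           tendsto_in_prob_zero M (\<lambda>n \<omega>. real n powr \<beta> * X n \<omega>) \<and>
           (\<forall>n\<ge>1. AE \<omega> in M. \<bar>X n \<omega>\<bar> \<le> b) \<and>
           \<not> uniformly_tight M (\<lambda>n \<omega>. real n powr \<beta> * cesaro X n \<omega>)"
proof (intro exI conjI allI impI)
  show "prob_space uniform_unit_interval"
    by (rule prob_space_uniform_unit_interval)
  show "typewriter b n \<in> borel_measurable uniform_unit_interval" for n
    by measurable
  show "tendsto_in_prob_zero uniform_unit_interval (\<lambda>n \<omega>. real n powr \<beta> * typewriter b n \<omega>)"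
  proof (rule tendsto_in_prob_zeroI[where A = typewriter_interval])
    show "finite_measure uniform_unit_interval"
      using prob_space_uniform_unit_interval by (simp add: prob_space_def)
    show "typewriter_interval n \<in> sets uniform_unit_interval" for n
      by (simp add: typewriter_interval_def)
    show "\<omega> \<in> typewriter_interval n" if "real n powr \<beta> * typewriter b n \<omega> \<noteq> 0" for n \<omega>
      using that by (simp add: typewriter_def split: split_indicator_asm)
  qed (rule measure_typewriter_interval_tendsto_0)
  show "AE \<omega> in uniform_unit_interval. \<bar>typewriter b n \<omega>\<bar> \<le> b" for n
    using assms(3) by (intro AE_I2 abs_typewriter_le) simp
  show "\<not> uniformly_tight uniform_unit_interval (\<lambda>n \<omega>. real n powr \<beta> * cesaro (typewriter b) n \<omega>)"
  proof (rule not_uniformly_tightI[OF prob_space_uniform_unit_interval])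
    show "(\<lambda>\<omega>. real n powr \<beta> * cesaro (typewriter b) n \<omega>) \<in> borel_measurable uniform_unit_interval"
      for n unfolding cesaro_def by measurable
    show "\<exists>n\<ge>1. AE \<omega> in uniform_unit_interval. K < \<bar>real n powr \<beta> * cesaro (typewriter b) n \<omega>\<bar>" for K
      using cesaro_typewriter_unbounded[OF assms(1,3), of K] AE_uniform_unit_interval
      by auto
  qed
qed

end
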